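(* Let $D_1,\dots,D_n$ be semi-interlaced polytopes in a finite set $\mathbf P\subset\mathbb Z^n$ with $P=\operatorname{Conv}\mathbf P$. Let $S_1,S_2$ be sutures such that $S_1\cap S_2\neq\emptyset$ and $\operatorname{aff}(S_1\cap S_2)=\operatorname{aff}(S_1)\cap\operatorname{aff}(S_2)$. Then both $S_1\cap S_2$ and $P\cap\operatorname{aff}(S_1\cup S_2)$ are sutures.
   Context: **Daughter polytope.** For a nonempty polytope $D$ with vertices in $\mathbf P$, $\mathcal D(D)$ is the set of inclusion-maximal faces of $P$ disjoint from $D$. $D$ is a daughter polytope of $\mathbf P$ if: 1. distinct members of $\mathcal D(D)$ are disjoint; 2. $D=\operatorname{Conv}(\mathbf P\setminus\bigcup_{F\in\mathcal D(D)}F)$. **Semi-interlaced and sutures.** Daughter polytopes $D_1,\dots,D_n$ of $\mathbf P\subset\mathbb Z^n$ are semi-interlaced in $\mathbf P$ if every face $F$ of $P$ meets at least $\dim F$ of them. A face of $P$ meeting exactly $\dim F$ of them is called a suture. *)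

theory Defs
  imports "HOL-Analysis.Analysis"
begin

definition integral_point :: "real^'n \<Rightarrow> bool" where
  "integral_point x \<longleftrightarrow> (\<forall>i. x $ i \<in> \<int>)"

definition max_disjoint_faces :: "(real^'n) set \<Rightarrow> (real^'n) set \<Rightarrow> (real^'n) set set" where
  "max_disjoint_faces Pts D =
     {F. F face_of convex hull Pts \<and> F \<inter> D = {} \<and>
         (\<forall>G. G face_of convex hull Pts \<and> G \<inter> D = {} \<and> F \<subseteq> G \<longrightarrow> G = F)}"

definition daughter_polytope :: "(real^'n) set \<Rightarrow> (real^'n) set \<Rightarrow> bool" where
  "daughter_polytope Pts D \<longleftrightarrow>
     D \<noteq> {} \<and> (\<exists>V. V \<subseteq> Pts \<and> D = convex hull V) \<and>
     (\<forall>F\<in>max_disjoint_faces Pts D. \<forall>G\<in>max_disjoint_faces Pts D. F \<noteq> G \<longrightarrow> F \<inter> G = {}) \<and>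
     D = convex hull (Pts - \<Union>(max_disjoint_faces Pts D))"

definition num_met :: "('n \<Rightarrow> (real^'n) set) \<Rightarrow> (real^'n) set \<Rightarrow> nat" where
  "num_met D F = card {i. D i \<inter> F \<noteq> {}}"

text \<open>Semi-interlaced: the n = CARD('n) polytopes D i (indexed by 'n) are daughter polytopes
  and every face F of P meets at least dim F of them.\<close>
definition semi_interlaced :: "(real^'n) set \<Rightarrow> ('n \<Rightarrow> (real^'n) set) \<Rightarrow> bool" where
  "semi_interlaced Pts D \<longleftrightarrow>
     (\<forall>i. daughter_polytope Pts (D i)) \<and>
     (\<forall>F. F face_of convex hull Pts \<longrightarrow> aff_dim F \<le> int (num_met D F))"

definition suture :: "(real^'n) set \<Rightarrow> ('n \<Rightarrow> (real^'n) set) \<Rightarrow> (real^'n) set \<Rightarrow> bool" where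
  "suture Pts D F \<longleftrightarrow> F face_of convex hull Pts \<and> int (num_met D F) = aff_dim F"

end

theory Submission
  imports Defs
begin

text \<open>Let \<open>J\<close> be the smallest face of \<open>P\<close> containing \<open>S\<^sub>1 \<union> S\<^sub>2\<close>. A daughter polytope
  missing \<open>S\<^sub>1\<close> and \<open>S\<^sub>2\<close> misses \<open>J\<close>: its maximal disjoint faces are pairwise disjoint,
  so, as \<open>S\<^sub>1 \<inter> S\<^sub>2 \<noteq> {}\<close>, a single one of them contains both. By inclusion-exclusion the
  numbers of daughter polytopes met by \<open>S\<^sub>1 \<inter> S\<^sub>2\<close> and by \<open>J\<close> add up to at most
  \<open>dim S\<^sub>1 + dim S\<^sub>2\<close>. The hypothesis on affine hulls gives the dimension formula
  \<open>dim S\<^sub>1 + dim S\<^sub>2 = dim (S\<^sub>1 \<inter> S\<^sub>2) + dim (aff S\<^sub>1 + aff S\<^sub>2) \<le> dim (S\<^sub>1 \<inter> S\<^sub>2) + dim J\<close>,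
  so the semi-interlacing inequalities for \<open>S\<^sub>1 \<inter> S\<^sub>2\<close> and \<open>J\<close> are both tight, and \<open>J\<close>
  has the dimension of \<open>S\<^sub>1 \<union> S\<^sub>2\<close>, whence \<open>J = P \<inter> aff (S\<^sub>1 \<union> S\<^sub>2)\<close>.\<close>

lemma aff_dim_add_le_aff_dim_Int_Un:
  fixes S T :: "'a::euclidean_space set"
  assumes "S \<inter> T \<noteq> {}" and "affine hull (S \<inter> T) = affine hull S \<inter> affine hull T"
  shows "aff_dim S + aff_dim T \<le> aff_dim (S \<inter> T) + aff_dim (S \<union> T)"
proof -
  obtain a where a: "a \<in> S" "a \<in> T" using assms(1) by auto
  let ?sums = "{x + y |x y. x \<in> affine hull S \<and> y \<in> affine hull T}"
  have "?sums \<subseteq> (+) a ` (affine hull (S \<union> T))"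
  proof
    fix z assume "z \<in> ?sums"
    then obtain x y where z: "z = x + y" "x \<in> affine hull S" "y \<in> affine hull T" by auto
    have "x + 1 *\<^sub>R (y - a) \<in> affine hull (S \<union> T)"
      by (rule mem_affine_3_minus)
        (use z a hull_mono[of S "S \<union> T"] hull_mono[of T "S \<union> T"] hull_inc[of a "S \<union> T"] in auto)
    then show "z \<in> (+) a ` (affine hull (S \<union> T))"
      using z by (intro image_eqI[of _ _ "x + y - a"]) (auto simp: add_diff_eq)
  qed
  then have "aff_dim ?sums \<le> aff_dim ((+) a ` (affine hull (S \<union> T)))"
    by (rule aff_dim_subset)
  moreover have "S \<inter> T \<subseteq> affine hull S \<inter> affine hull T"
    using hull_subset[of S affine] hull_subset[of T affine] by blast
  then have hulls_meet: "affine hull S \<inter> affine hull T \<noteq> {}" using assms(1) by blast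
  have "aff_dim ?sums = aff_dim S + aff_dim T - aff_dim (S \<inter> T)"
    using aff_dim_sums_Int[OF affine_affine_hull affine_affine_hull hulls_meet]
    unfolding assms(2)[symmetric] aff_dim_affine_hull .
  ultimately show ?thesis by (simp add: aff_dim_translation_eq)
qed

lemma face_hull_face_of:
  fixes P S :: "'a::euclidean_space set"
  assumes "convex P" and "S \<subseteq> P"
  shows "((\<lambda>F. F face_of P) hull S) face_of P"
  unfolding hull_def using assms by (intro face_of_Inter) (auto intro: face_of_refl)

lemma face_of_eq_Int_affine_hull:
  fixes P F S :: "'a::euclidean_space set"
  assumes "convex P" and "F face_of P" and "S \<subseteq> F" and "aff_dim F \<le> aff_dim S"
  shows "P \<inter> affine hull S = F"
proof (cases "S = {}")
  case True
  then have "aff_dim F = -1" using assms(4) aff_dim_geq[of F] by simp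
  then have "F = {}" using aff_dim_empty by blast
  then show ?thesis using True by simp
next
  case False
  have "affine hull S = affine hull F"
    using False assms(3,4) aff_dim_subset[OF assms(3)] hull_mono[OF assms(3)]
    by (intro affine_dim_equal) auto
  then show ?thesis
    using face_of_imp_eq_affine_Int[OF assms(1,2)] by blast
qed

lemma face_subset_max_disjoint_face:
  fixes Pts :: "(real^'n) set"
  assumes "finite Pts" and "S face_of convex hull Pts" and "S \<inter> D = {}"
  shows "\<exists>M\<in>max_disjoint_faces Pts D. S \<subseteq> M"
proof -
  let ?C = "{G. G face_of convex hull Pts \<and> G \<inter> D = {}}"
  have "finite ?C"
    using finite_polytope_faces[of "convex hull Pts"] assms(1)
    by (auto simp: polytope_def intro: finite_subset[rotated])
  then obtain M where "M \<in> ?C" "S \<subseteq> M" "\<forall>G\<in>?C. M \<subseteq> G \<longrightarrow> M = G"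
    using finite_has_maximal2[of ?C S] assms(2,3) by auto
  then show ?thesis unfolding max_disjoint_faces_def by auto
qed

lemma daughter_polytope_disjoint_face_hull_Un:
  fixes Pts :: "(real^'n) set"
  assumes "finite Pts" and "daughter_polytope Pts D"
    and "S face_of convex hull Pts" and "T face_of convex hull Pts" and "S \<inter> T \<noteq> {}"
    and "D \<inter> S = {}" and "D \<inter> T = {}"
  shows "D \<inter> ((\<lambda>F. F face_of convex hull Pts) hull (S \<union> T)) = {}"
proof -
  obtain M where M: "M \<in> max_disjoint_faces Pts D" "S \<subseteq> M"
    using face_subset_max_disjoint_face[OF assms(1,3)] assms(6) by blast
  obtain N where N: "N \<in> max_disjoint_faces Pts D" "T \<subseteq> N"
    using face_subset_max_disjoint_face[OF assms(1,4)] assms(7) by blast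
  have "\<forall>F\<in>max_disjoint_faces Pts D. \<forall>G\<in>max_disjoint_faces Pts D. F \<noteq> G \<longrightarrow> F \<inter> G = {}"
    using assms(2) unfolding daughter_polytope_def by (elim conjE)
  moreover have "M \<inter> N \<noteq> {}" using M(2) N(2) assms(5) by blast
  ultimately have "M = N" using M(1) N(1) by blast
  moreover have "M face_of convex hull Pts" "D \<inter> M = {}"
    using M(1) unfolding max_disjoint_faces_def by auto
  ultimately have "(\<lambda>F. F face_of convex hull Pts) hull (S \<union> T) \<subseteq> M"
    using M(2) N(2) by (intro hull_minimal) auto
  with \<open>D \<inter> M = {}\<close> show ?thesis by blast
qed

lemma num_met_Int_add_le:
  fixes D :: "'n \<Rightarrow> (real^'n) set"
  assumes "\<And>i. D i \<inter> J \<noteq> {} \<Longrightarrow> D i \<inter> S \<noteq> {} \<or> D i \<inter> T \<noteq> {}"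
  shows "num_met D (S \<inter> T) + num_met D J \<le> num_met D S + num_met D T"
proof -
  let ?I = "\<lambda>F. {i. D i \<inter> F \<noteq> {}}"
  have "card (?I (S \<inter> T)) \<le> card (?I S \<inter> ?I T)" by (intro card_mono) auto
  moreover have "card (?I J) \<le> card (?I S \<union> ?I T)" using assms by (intro card_mono) auto
  moreover have "card (?I S) + card (?I T) = card (?I S \<union> ?I T) + card (?I S \<inter> ?I T)"
    by (intro card_Un_Int) auto
  ultimately show ?thesis unfolding num_met_def by linarith
qed

theorem proposition3p2:
  fixes Pts :: "(real^'n) set" and D :: "'n \<Rightarrow> (real^'n) set" and S1 S2 :: "(real^'n) set"
  assumes "finite Pts" and "\<forall>x\<in>Pts. integral_point x"
    and "semi_interlaced Pts D"
    and "suture Pts D S1" and "suture Pts D S2"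
    and "S1 \<inter> S2 \<noteq> {}"
    and "affine hull (S1 \<inter> S2) = affine hull S1 \<inter> affine hull S2"
  shows "suture Pts D (S1 \<inter> S2) \<and> suture Pts D (convex hull Pts \<inter> affine hull (S1 \<union> S2))"
proof -
  let ?P = "convex hull Pts"
  define J where "J = (\<lambda>F. F face_of ?P) hull (S1 \<union> S2)"
  have S12: "S1 face_of ?P" "S2 face_of ?P"
    and tight12: "int (num_met D S1) = aff_dim S1" "int (num_met D S2) = aff_dim S2"
    and daughter: "\<And>i. daughter_polytope Pts (D i)"
    and lower: "\<And>F. F face_of ?P \<Longrightarrow> aff_dim F \<le> int (num_met D F)"
    using assms(3-5) unfolding suture_def semi_interlaced_def by auto
  have S: "(S1 \<inter> S2) face_of ?P" using face_of_Int[OF S12] .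
  have J: "J face_of ?P" "S1 \<union> S2 \<subseteq> J"
    unfolding J_def using S12 face_of_imp_subset
    by (auto intro: face_hull_face_of hull_subset[THEN subsetD])
  have "num_met D (S1 \<inter> S2) + num_met D J \<le> num_met D S1 + num_met D S2"
    using daughter_polytope_disjoint_face_hull_Un[OF assms(1) daughter S12 assms(6)]
    unfolding J_def by (intro num_met_Int_add_le) blast
  moreover have "aff_dim S1 + aff_dim S2 \<le> aff_dim (S1 \<inter> S2) + aff_dim (S1 \<union> S2)"
    using aff_dim_add_le_aff_dim_Int_Un[OF assms(6,7)] .
  moreover have "aff_dim (S1 \<union> S2) \<le> aff_dim J" using aff_dim_subset[OF J(2)] .
  ultimately have tight_S: "int (num_met D (S1 \<inter> S2)) = aff_dim (S1 \<inter> S2)"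
    and tight_J: "int (num_met D J) = aff_dim J" and "aff_dim J \<le> aff_dim (S1 \<union> S2)"
    using lower[OF S] lower[OF J(1)] tight12 by linarith+
  then have "?P \<inter> affine hull (S1 \<union> S2) = J"
    using face_of_eq_Int_affine_hull[OF convex_convex_hull J] by blast
  then show ?thesis using S J(1) tight_S tight_J unfolding suture_def by simp
qed

end
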